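(* Let $n\ge2$, $\boldsymbol\sigma\in\{+,-\}^n$, $0\le s<t<1$, and let $\mathcal A:\mathbb Z_L^n\to\mathbb C$. Then $$\|\mathcal U_{s,t,\boldsymbol\sigma}\circ\mathcal A\|_{\max}\prec\|\mathcal A\|_{\max}\cdot(\eta_s/\eta_t)^n.$$
   Context: Fix $|E|<2$; $m=\lim_{\varepsilon\downarrow0}m_{sc}(E+i\varepsilon)$ ($m_{sc}$ the semicircle Stieltjes transform), $m(+)=m$, $m(-)=\bar m$, $\eta_t=(1-t)\operatorname{Im}m$. $S^{(B)}$ is the $L\times L$ matrix $S^{(B)}_{ab}=\frac13\mathbf 1(a-b\in\{-1,0,1\}\bmod L)$. For $m_i=m(\sigma_i)$ with the convention $\sigma_{n+1}=\sigma_1$, $(\mathcal U_{s,t,\boldsymbol\sigma}\circ\mathcal A)_{\mathbf a}=\sum_{\mathbf b\in\mathbb Z_L^n}\prod_{i=1}^n\Big(\frac{1-s\,m_im_{i+1}S^{(B)}}{1-t\,m_im_{i+1}S^{(B)}}\Big)_{a_ib_i}\mathcal A_{\mathbf b}$. $\|\mathcal A\|_{\max}=\max_{\mathbf a}|\mathcal A_{\mathbf a}|$. For deterministic quantities, $\xi\prec\zeta$ means $\xi\le N^\epsilon\zeta$ for all $\epsilon>0$ and large $N$, where $L$, $W$ depend on $N$. *)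

theory Defs
  imports "HOL-Analysis.Analysis" "Jordan_Normal_Form.Gauss_Jordan_Elimination"
begin

definition msc :: "complex \<Rightarrow> complex" where
  "msc z = integral {-2..2::real}
     (\<lambda>x. complex_of_real (sqrt (4 - x\<^sup>2) / (2 * pi)) / (complex_of_real x - z))"

definition mE :: "real \<Rightarrow> complex" where
  "mE E = Lim (at_right (0::real)) (\<lambda>\<epsilon>. msc (complex_of_real E + \<i> * complex_of_real \<epsilon>))"

text \<open>m(+) = m, m(-) = conj m; sign True means +.\<close>
definition msig :: "real \<Rightarrow> bool \<Rightarrow> complex" where
  "msig E sg = (if sg then mE E else cnj (mE E))"

definition eta :: "real \<Rightarrow> real \<Rightarrow> real" where
  "eta E t = (1 - t) * Im (mE E)"

definition SB :: "nat \<Rightarrow> complex mat" where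
  "SB L = mat L L (\<lambda>(a, b). if (a + 1) mod L = b mod L \<or> a mod L = b mod L
                                 \<or> a mod L = (b + 1) mod L then 1/3 else 0)"

definition ratio_mat :: "nat \<Rightarrow> real \<Rightarrow> real \<Rightarrow> complex \<Rightarrow> complex mat" where
  "ratio_mat L s t z = (1\<^sub>m L - (complex_of_real s * z) \<cdot>\<^sub>m SB L) *
       the (mat_inverse (1\<^sub>m L - (complex_of_real t * z) \<cdot>\<^sub>m SB L))"

text \<open>Index tuples a in Z_L^n, represented as extensional functions on {0..<n}.\<close>
definition Idx :: "nat \<Rightarrow> nat \<Rightarrow> (nat \<Rightarrow> nat) set" where
  "Idx L n = PiE {0..<n} (\<lambda>_. {0..<L})"

text \<open>The operator U_{s,t,sigma}; sigma_n = sigma_0 cyclically (0-based indexing).\<close>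
definition Uop :: "real \<Rightarrow> nat \<Rightarrow> nat \<Rightarrow> real \<Rightarrow> real \<Rightarrow> (nat \<Rightarrow> bool)
                    \<Rightarrow> ((nat \<Rightarrow> nat) \<Rightarrow> complex) \<Rightarrow> (nat \<Rightarrow> nat) \<Rightarrow> complex" where
  "Uop E L n s t \<sigma> A a = (\<Sum>b\<in>Idx L n.
      (\<Prod>i<n. ratio_mat L s t (msig E (\<sigma> i) * msig E (\<sigma> ((i + 1) mod n))) $$ (a i, b i)) * A b)"

definition maxnorm :: "nat \<Rightarrow> nat \<Rightarrow> ((nat \<Rightarrow> nat) \<Rightarrow> complex) \<Rightarrow> real" where
  "maxnorm L n A = Max ((\<lambda>a. cmod (A a)) ` Idx L n)"

end

(*
  Put x = m_i m_(i+1). For |E| < 2 the boundary value m lies on the unit circle with Im m > 0: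
  substituting x = 2 cos u in the Stieltjes integral gives the closed form m_sc(q + 1/q) = -q for
  0 < |q| < 1. Hence |x| = 1 and eta_s / eta_t = (1 - s) / (1 - t).
  The rows of S^(B) have absolute sums at most 1. So for |x| <= 1 the resolvent
  B = (1 - t x S)^-1 = 1 + t x S B has absolute row sums at most 1 / (1 - t), and
  (1 - s x S) B = 1 + (t - s) x S B has absolute row sums at most (1 - s) / (1 - t).
  U acts as a tensor product of n such matrices, so it enlarges the max-norm by at most
  ((1 - s) / (1 - t))^n. This bound holds for every n and needs no factor N^eps.
*)

theory Submission
  imports Defs "Jordan_Normal_Form.Determinant"
begin

section \<open>Absolute row sums\<close>

definition row_abs_sum :: "'a::real_normed_field mat \<Rightarrow> nat \<Rightarrow> real" where
  "row_abs_sum M i = (\<Sum>j<dim_col M. norm (M $$ (i, j)))"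

lemma row_abs_sum_nonneg: "0 \<le> row_abs_sum M i"
  unfolding row_abs_sum_def by (simp add: sum_nonneg)

lemma norm_mult_mat_vec_le:
  fixes A :: "'a::real_normed_field mat" and v :: "'a vec"
  assumes A: "A \<in> carrier_mat nr nc" and v: "v \<in> carrier_vec nc" and i: "i < nr"
    and bound: "\<And>k. k < nc \<Longrightarrow> norm (v $ k) \<le> \<mu>"
  shows "norm ((A *\<^sub>v v) $ i) \<le> row_abs_sum A i * \<mu>"
proof -
  have "(A *\<^sub>v v) $ i = (\<Sum>k<nc. A $$ (i, k) * v $ k)"
    using A v i by (simp add: scalar_prod_def lessThan_atLeast0)
  also have "norm \<dots> \<le> (\<Sum>k<nc. norm (A $$ (i, k)) * \<mu>)"
    by (intro order.trans[OF norm_sum] sum_mono) (simp add: norm_mult bound mult_left_mono)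
  also have "\<dots> = row_abs_sum A i * \<mu>"
    using A by (simp add: row_abs_sum_def sum_distrib_right)
  finally show ?thesis .
qed

lemma row_abs_sum_mult_le:
  fixes A :: "'a::real_normed_field mat"
  assumes A: "A \<in> carrier_mat nr n" and B: "B \<in> carrier_mat n nc" and i: "i < nr"
    and bound: "\<And>k. k < n \<Longrightarrow> row_abs_sum B k \<le> c"
  shows "row_abs_sum (A * B) i \<le> row_abs_sum A i * c"
proof -
  have "row_abs_sum (A * B) i = (\<Sum>j<nc. norm (\<Sum>k<n. A $$ (i, k) * B $$ (k, j)))"
    unfolding row_abs_sum_def using A B i by (simp add: scalar_prod_def lessThan_atLeast0)
  also have "\<dots> \<le> (\<Sum>j<nc. \<Sum>k<n. norm (A $$ (i, k)) * norm (B $$ (k, j)))"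
    by (intro sum_mono order.trans[OF norm_sum]) (simp add: norm_mult)
  also have "\<dots> = (\<Sum>k<n. norm (A $$ (i, k)) * row_abs_sum B k)"
    using B by (subst sum.swap) (simp add: row_abs_sum_def sum_distrib_left)
  also have "\<dots> \<le> (\<Sum>k<n. norm (A $$ (i, k)) * c)"
    by (intro sum_mono mult_left_mono bound) auto
  also have "\<dots> = row_abs_sum A i * c"
    using A by (simp add: row_abs_sum_def sum_distrib_right)
  finally show ?thesis .
qed

lemma row_abs_sum_one_plus_smult_le:
  fixes X :: "'a::real_normed_field mat"
  assumes X: "X \<in> carrier_mat n n" and i: "i < n"
  shows "row_abs_sum (1\<^sub>m n + d \<cdot>\<^sub>m X) i \<le> 1 + norm d * row_abs_sum X i"
proof -
  have dim: "dim_col (1\<^sub>m n + d \<cdot>\<^sub>m X) = n" using X by simp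
  have "row_abs_sum (1\<^sub>m n + d \<cdot>\<^sub>m X) i
      \<le> (\<Sum>j<n. (if i = j then 1 else 0) + norm d * norm (X $$ (i, j)))"
    unfolding row_abs_sum_def dim using X i
    by (intro sum_mono) (auto intro: order.trans[OF norm_triangle_ineq] simp: norm_mult)
  also have "\<dots> = 1 + norm d * row_abs_sum X i"
    using X i by (simp add: sum.distrib row_abs_sum_def sum_distrib_left)
  finally show ?thesis .
qed

lemma eq_zero_vec_if_fixed_by_smult:
  fixes S :: "'a::real_normed_field mat" and v :: "'a vec"
  assumes S: "S \<in> carrier_mat n n" and rows: "\<And>i. i < n \<Longrightarrow> row_abs_sum S i \<le> 1"
    and c: "norm c < 1" and v: "v \<in> carrier_vec n"
    and fixed: "\<And>k. k < n \<Longrightarrow> v $ k = c * (S *\<^sub>v v) $ k"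
  shows "v = 0\<^sub>v n"
proof (cases "n = 0")
  case True
  with v show ?thesis by (intro eq_vecI) auto
next
  case False
  define \<mu> where "\<mu> = Max ((\<lambda>k. norm (v $ k)) ` {..<n})"
  have le_mu: "norm (v $ k) \<le> \<mu>" if "k < n" for k
    unfolding \<mu>_def using that by (intro Max_ge) auto
  have "norm (v $ k) \<le> norm c * \<mu>" if k: "k < n" for k
  proof -
    have "norm (v $ k) = norm c * norm ((S *\<^sub>v v) $ k)"
      by (simp add: fixed[OF k] norm_mult)
    also have "\<dots> \<le> norm c * (row_abs_sum S k * \<mu>)"
      by (intro mult_left_mono norm_mult_mat_vec_le[OF S v k le_mu]) auto
    also have "\<dots> \<le> norm c * \<mu>"
      using rows[OF k] order_trans[OF norm_ge_zero le_mu[OF k]] row_abs_sum_nonneg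
      by (intro mult_left_mono mult_left_le_one_le) auto
    finally show ?thesis .
  qed
  moreover have "\<mu> \<in> (\<lambda>k. norm (v $ k)) ` {..<n}"
    unfolding \<mu>_def using False by (intro Max_in) auto
  ultimately have "\<mu> \<le> norm c * \<mu>" by auto
  then have "\<mu> \<le> 0"
    using c by (metis mult_le_cancel_right1 not_le)
  then have "v $ k = 0" if "k < n" for k
    using le_mu[OF that] by (metis norm_le_zero_iff order_trans)
  then show "v = 0\<^sub>v n"
    using v by (intro eq_vecI) auto
qed

lemma det_one_minus_smult_neq_0:
  fixes S :: "'a::real_normed_field mat"
  assumes S: "S \<in> carrier_mat n n" and rows: "\<And>i. i < n \<Longrightarrow> row_abs_sum S i \<le> 1"
    and c: "norm c < 1"
  shows "det (1\<^sub>m n - c \<cdot>\<^sub>m S) \<noteq> 0"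
proof
  assume "det (1\<^sub>m n - c \<cdot>\<^sub>m S) = 0"
  moreover have "1\<^sub>m n - c \<cdot>\<^sub>m S \<in> carrier_mat n n"
    using S by (intro minus_carrier_mat smult_carrier_mat)
  ultimately obtain v where v: "v \<in> carrier_vec n" "v \<noteq> 0\<^sub>v n"
    and kernel: "(1\<^sub>m n - c \<cdot>\<^sub>m S) *\<^sub>v v = 0\<^sub>v n"
    using det_0_iff_vec_prod_zero_field by blast
  have "v $ k = c * (S *\<^sub>v v) $ k" if k: "k < n" for k
  proof -
    have "(1\<^sub>m n *\<^sub>v v - (c \<cdot>\<^sub>m S) *\<^sub>v v) $ k = 0"
      using kernel k by (simp add: minus_mult_distrib_mat_vec[OF one_carrier_mat smult_carrier_mat[OF S] v(1)])
    then show ?thesis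
      using S v(1) k by simp
  qed
  with v(2) show False
    using eq_zero_vec_if_fixed_by_smult[OF S rows c v(1)] by blast
qed

lemma one_minus_smult_mult:
  fixes S B :: "'a::comm_ring_1 mat"
  assumes "S \<in> carrier_mat n n" "B \<in> carrier_mat n n"
  shows "(1\<^sub>m n - c \<cdot>\<^sub>m S) * B = B - c \<cdot>\<^sub>m (S * B)"
  using assms by (simp add: minus_mult_distrib_mat[of _ n n] mult_smult_assoc_mat)

lemma mat_inverse_one_minus_smult:
  fixes S :: "'a::real_normed_field mat"
  assumes S: "S \<in> carrier_mat n n" and rows: "\<And>i. i < n \<Longrightarrow> row_abs_sum S i \<le> 1"
    and c: "norm c < 1"
  obtains B where "mat_inverse (1\<^sub>m n - c \<cdot>\<^sub>m S) = Some B" "B \<in> carrier_mat n n"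
    "B = 1\<^sub>m n + c \<cdot>\<^sub>m (S * B)"
proof -
  have M: "1\<^sub>m n - c \<cdot>\<^sub>m S \<in> carrier_mat n n"
    using S by (intro minus_carrier_mat smult_carrier_mat)
  have "mat_inverse (1\<^sub>m n - c \<cdot>\<^sub>m S) \<noteq> None"
    using mat_inverse(1)[OF M, of "()"]
      det_non_zero_imp_unit[OF M det_one_minus_smult_neq_0[OF S rows c], of "()"] by blast
  then obtain B where B: "mat_inverse (1\<^sub>m n - c \<cdot>\<^sub>m S) = Some B" by blast
  then have BC: "B \<in> carrier_mat n n" and "(1\<^sub>m n - c \<cdot>\<^sub>m S) * B = 1\<^sub>m n"
    using mat_inverse(2)[OF M] by blast+
  then have inv: "B - c \<cdot>\<^sub>m (S * B) = 1\<^sub>m n"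
    using S by (simp add: one_minus_smult_mult)
  have "B = 1\<^sub>m n + c \<cdot>\<^sub>m (S * B)"
  proof (rule eq_matI)
    fix i j assume "i < dim_row (1\<^sub>m n + c \<cdot>\<^sub>m (S * B))" "j < dim_col (1\<^sub>m n + c \<cdot>\<^sub>m (S * B))"
    then show "B $$ (i, j) = (1\<^sub>m n + c \<cdot>\<^sub>m (S * B)) $$ (i, j)"
      using arg_cong[OF inv, of "\<lambda>M. M $$ (i, j)"] S BC by (simp add: algebra_simps)
  qed (use S BC in auto)
  with B BC that show ?thesis by blast
qed

lemma row_abs_sum_resolvent_le:
  fixes S B :: "'a::real_normed_field mat"
  assumes S: "S \<in> carrier_mat n n" and rows: "\<And>i. i < n \<Longrightarrow> row_abs_sum S i \<le> 1"
    and B: "B \<in> carrier_mat n n" "B = 1\<^sub>m n + c \<cdot>\<^sub>m (S * B)"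
    and c: "norm c \<le> t" "t < 1" and k: "k < n"
  shows "row_abs_sum (S * B) k \<le> 1 / (1 - t)"
proof -
  define \<beta> where "\<beta> = Max (row_abs_sum B ` {..<n})"
  have le_beta: "row_abs_sum B j \<le> \<beta>" if "j < n" for j
    unfolding \<beta>_def using that by (intro Max_ge) auto
  have "0 \<le> \<beta>"
    using le_beta[OF k] row_abs_sum_nonneg order_trans by blast
  have SB_le_beta: "row_abs_sum (S * B) j \<le> \<beta>" if j: "j < n" for j
  proof -
    have "row_abs_sum (S * B) j \<le> row_abs_sum S j * \<beta>"
      by (rule row_abs_sum_mult_le[OF S B(1) j le_beta])
    also have "\<dots> \<le> \<beta>"
      using rows[OF j] \<open>0 \<le> \<beta>\<close> by (simp add: mult_left_le_one_le row_abs_sum_nonneg)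
    finally show ?thesis .
  qed
  have "row_abs_sum B j \<le> 1 + t * \<beta>" if j: "j < n" for j
  proof -
    have "row_abs_sum B j \<le> 1 + norm c * row_abs_sum (S * B) j"
      using row_abs_sum_one_plus_smult_le[of "S * B" n j c] S B j by simp
    also have "\<dots> \<le> 1 + t * \<beta>"
      using c order_trans[OF norm_ge_zero c(1)] SB_le_beta[OF j] \<open>0 \<le> \<beta>\<close>
      by (intro add_left_mono mult_mono) (auto simp: row_abs_sum_nonneg)
    finally show ?thesis .
  qed
  moreover have "\<beta> \<in> row_abs_sum B ` {..<n}"
    unfolding \<beta>_def using k by (intro Max_in) auto
  ultimately have "\<beta> \<le> 1 + t * \<beta>" by auto
  then have "\<beta> \<le> 1 / (1 - t)"
    using c by (simp add: field_simps)
  with SB_le_beta[OF k] show ?thesis by linarith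
qed

lemma row_abs_sum_ratio_le:
  fixes S :: "'a::real_normed_field mat"
  assumes S: "S \<in> carrier_mat n n" and rows: "\<And>i. i < n \<Longrightarrow> row_abs_sum S i \<le> 1"
    and x: "norm x \<le> 1" and st: "0 \<le> s" "s < t" "t < 1"
  defines "R \<equiv> (1\<^sub>m n - (of_real s * x) \<cdot>\<^sub>m S) * the (mat_inverse (1\<^sub>m n - (of_real t * x) \<cdot>\<^sub>m S))"
  shows "R \<in> carrier_mat n n" and "\<And>i. i < n \<Longrightarrow> row_abs_sum R i \<le> (1 - s) / (1 - t)"
proof -
  have c: "norm (of_real t * x) \<le> t"
    using x st by (simp add: norm_mult mult_left_le)
  obtain B where B: "mat_inverse (1\<^sub>m n - (of_real t * x) \<cdot>\<^sub>m S) = Some B" "B \<in> carrier_mat n n"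
    "B = 1\<^sub>m n + (of_real t * x) \<cdot>\<^sub>m (S * B)"
    using mat_inverse_one_minus_smult[OF S rows] c st by (metis le_less_trans)
  have R_B: "R = B - (of_real s * x) \<cdot>\<^sub>m (S * B)"
    unfolding R_def B(1) using S B(2) by (simp add: one_minus_smult_mult)
  then show "R \<in> carrier_mat n n"
    using S B(2) by (simp add: minus_carrier_mat)
  have R_eq: "R = 1\<^sub>m n + (of_real (t - s) * x) \<cdot>\<^sub>m (S * B)"
  proof (rule eq_matI)
    fix i j assume "i < dim_row (1\<^sub>m n + (of_real (t - s) * x) \<cdot>\<^sub>m (S * B))"
      "j < dim_col (1\<^sub>m n + (of_real (t - s) * x) \<cdot>\<^sub>m (S * B))"
    then show "R $$ (i, j) = (1\<^sub>m n + (of_real (t - s) * x) \<cdot>\<^sub>m (S * B)) $$ (i, j)"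
      unfolding R_B using arg_cong[OF B(3), of "\<lambda>M. M $$ (i, j)"] S B(2)
      by (simp add: algebra_simps)
  qed (use R_B S B(2) in auto)
  have c_diff: "norm (of_real (t - s) * x) \<le> t - s"
    using x st by (simp add: norm_mult mult_left_le del: of_real_diff)
  fix i assume i: "i < n"
  have "row_abs_sum R i \<le> 1 + norm (of_real (t - s) * x) * row_abs_sum (S * B) i"
    unfolding R_eq using S B(2) i by (intro row_abs_sum_one_plus_smult_le) auto
  also have "\<dots> \<le> 1 + (t - s) * (1 / (1 - t))"
    using row_abs_sum_resolvent_le[OF S rows B(2,3) c st(3) i] c_diff st
    by (intro add_left_mono mult_mono) (auto simp: row_abs_sum_nonneg)
  also have "\<dots> = (1 - s) / (1 - t)"
    using st by (simp add: field_simps)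
  finally show "row_abs_sum R i \<le> (1 - s) / (1 - t)" .
qed

section \<open>The band matrix and the operator U\<close>

lemma SB_carrier: "SB L \<in> carrier_mat L L"
  by (simp add: SB_def)

lemma adjacent_mod_cases:
  fixes i k L :: nat
  assumes "i < L" "k < L"
    and "(i + 1) mod L = k mod L \<or> i mod L = k mod L \<or> i mod L = (k + 1) mod L"
  shows "k \<in> {(i + 1) mod L, i, (i + L - 1) mod L}"
  using assms by (auto simp: mod_if split: if_splits)

lemma row_abs_sum_SB_le_1:
  assumes i: "i < L"
  shows "row_abs_sum (SB L) i \<le> 1"
proof -
  define P where "P k \<longleftrightarrow> (i + 1) mod L = k mod L \<or> i mod L = k mod L \<or> i mod L = (k + 1) mod L"
    for k
  have "row_abs_sum (SB L) i = (\<Sum>k<L. if P k then 1 / 3 else 0)"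
    unfolding row_abs_sum_def SB_def P_def using i by (intro sum.cong) auto
  also have "\<dots> = (\<Sum>k\<in>{k\<in>{..<L}. P k}. 1 / 3)"
    by (rule sum.inter_filter[symmetric]) simp
  also have "\<dots> = card {k\<in>{..<L}. P k} / 3" by simp
  also have "card {k\<in>{..<L}. P k} \<le> card {(i + 1) mod L, i, (i + L - 1) mod L}"
    using adjacent_mod_cases[OF i] i by (intro card_mono) (auto simp: P_def)
  also have "\<dots> \<le> 3" by (simp add: card_insert_if)
  finally show ?thesis by simp
qed

lemma
  assumes "cmod x \<le> 1" "0 \<le> s" "s < t" "t < 1"
  shows ratio_mat_carrier: "ratio_mat L s t x \<in> carrier_mat L L"
    and row_abs_sum_ratio_mat_le: "i < L \<Longrightarrow> row_abs_sum (ratio_mat L s t x) i \<le> (1 - s) / (1 - t)"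
  unfolding ratio_mat_def
  using row_abs_sum_ratio_le[OF SB_carrier row_abs_sum_SB_le_1 assms] by blast+

lemma finite_Idx: "finite (Idx L n)"
  unfolding Idx_def by (intro finite_PiE) auto

lemma Idx_nonempty: "L \<ge> 1 \<Longrightarrow> Idx L n \<noteq> {}"
  unfolding Idx_def by (simp add: PiE_eq_empty_iff)

lemma maxnorm_ge: "a \<in> Idx L n \<Longrightarrow> cmod (A a) \<le> maxnorm L n A"
  unfolding maxnorm_def by (intro Max_ge finite_imageI finite_Idx) auto

lemma maxnorm_nonneg: "L \<ge> 1 \<Longrightarrow> 0 \<le> maxnorm L n A"
  using Idx_nonempty[of L n] maxnorm_ge[of _ L n A] by (meson all_not_in_conv norm_ge_zero order_trans)

lemma maxnorm_le:
  assumes "L \<ge> 1" "\<And>a. a \<in> Idx L n \<Longrightarrow> cmod (A a) \<le> c"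
  shows "maxnorm L n A \<le> c"
  unfolding maxnorm_def using assms Idx_nonempty finite_Idx by (subst Max_le_iff) auto

lemma maxnorm_tensor_le:
  fixes R :: "nat \<Rightarrow> complex mat"
  assumes L: "L \<ge> 1" and R: "\<And>i. i < n \<Longrightarrow> R i \<in> carrier_mat L L"
    and rows: "\<And>i k. i < n \<Longrightarrow> k < L \<Longrightarrow> row_abs_sum (R i) k \<le> \<rho>"
  shows "maxnorm L n (\<lambda>a. \<Sum>b\<in>Idx L n. (\<Prod>i<n. R i $$ (a i, b i)) * A b) \<le> maxnorm L n A * \<rho> ^ n"
proof (rule maxnorm_le[OF L])
  fix a assume a: "a \<in> Idx L n"
  let ?\<mu> = "maxnorm L n A"
  have "cmod (\<Sum>b\<in>Idx L n. (\<Prod>i<n. R i $$ (a i, b i)) * A b)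
      \<le> (\<Sum>b\<in>Idx L n. (\<Prod>i<n. cmod (R i $$ (a i, b i))) * ?\<mu>)"
    by (intro order.trans[OF norm_sum] sum_mono)
      (auto simp: norm_mult prod_norm intro!: mult_left_mono maxnorm_ge prod_nonneg)
  also have "\<dots> = ?\<mu> * (\<Sum>b\<in>Idx L n. \<Prod>i\<in>{0..<n}. cmod (R i $$ (a i, b i)))"
    by (simp add: sum_distrib_left mult.commute atLeast0LessThan)
  also have "(\<Sum>b\<in>Idx L n. \<Prod>i\<in>{0..<n}. cmod (R i $$ (a i, b i)))
      = (\<Prod>i\<in>{0..<n}. \<Sum>j\<in>{0..<L}. cmod (R i $$ (a i, j)))"
    unfolding Idx_def by (rule prod_sum_PiE[symmetric]) auto
  also have "\<dots> = (\<Prod>i\<in>{0..<n}. row_abs_sum (R i) (a i))"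
    using R by (intro prod.cong) (auto simp: row_abs_sum_def atLeast0LessThan)
  also have "\<dots> \<le> (\<Prod>i\<in>{0..<n}. \<rho>)"
    using a by (intro prod_mono conjI row_abs_sum_nonneg rows) (auto simp: Idx_def)
  also have "\<dots> = \<rho> ^ n" by simp
  finally show "cmod (\<Sum>b\<in>Idx L n. (\<Prod>i<n. R i $$ (a i, b i)) * A b) \<le> ?\<mu> * \<rho> ^ n"
    using maxnorm_nonneg[OF L] by (simp add: mult_left_mono)
qed

section \<open>The semicircle Stieltjes transform in the bulk\<close>

text \<open>A primitive of \<open>sin\<^sup>2 u / (2 cos u - (q + 1/q))\<close>, found by partial fractions in
  \<open>exp (\<i> * u)\<close>; the substitution \<open>x = 2 cos u\<close> turns \<open>msc (q + 1/q)\<close> into its integral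
  over \<open>[0, \<pi>]\<close>.\<close>
definition semicircle_primitive :: "complex \<Rightarrow> complex \<Rightarrow> complex" where
  "semicircle_primitive q u = -(1/4) * (2 * sin u + 2 * q * u
     - \<i> * (q - 1/q) * (Ln (1 - q * exp (-(\<i> * u))) - Ln (1 - q * exp (\<i> * u))))"

lemma has_field_derivative_semicircle_primitive:
  fixes q u :: complex
  assumes "1 - q * exp (\<i> * u) \<notin> \<real>\<^sub>\<le>\<^sub>0" "1 - q * exp (-(\<i> * u)) \<notin> \<real>\<^sub>\<le>\<^sub>0"
  shows "(semicircle_primitive q has_field_derivative -(1/4) * (2 * cos u + 2 * q + (q - 1/q) *
           (q * exp (-(\<i> * u)) / (1 - q * exp (-(\<i> * u))) + q * exp (\<i> * u) / (1 - q * exp (\<i> * u)))))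
         (at u)"
  unfolding semicircle_primitive_def
  by (rule derivative_eq_intros refl assms)+
    (simp only: mult_zero_left mult_zero_right add_0_left add_0_right mult_1_left mult_1_right
      diff_0 divide_inverse, simp add: ring_distribs mult_ac)

lemma semicircle_partial_fractions:
  fixes a q :: complex
  assumes a: "a \<noteq> 0" and q: "q \<noteq> 0" and aq: "a \<noteq> q" and qa: "q * a \<noteq> 1"
  shows "-(1/4) * (a + 1/a + 2 * q + (q - 1/q) * (q * (1/a) / (1 - q * (1/a)) + q * a / (1 - q * a)))
       = ((a - 1/a) / (2 * \<i>))\<^sup>2 / (2 * ((a + 1/a) / 2) - (q + 1/q))"
proof -
  define d1 d2 where "d1 = a - q" and "d2 = a * q - 1"
  have d: "d1 \<noteq> 0" "d2 \<noteq> 0"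
    using aq qa by (auto simp: d1_def d2_def algebra_simps)
  have fractions: "q * (1/a) / (1 - q * (1/a)) = q / d1" "q * a / (1 - q * a) = - (q * a) / d2"
    using a d by (simp_all add: d1_def d2_def field_simps)
  have denominator: "2 * ((a + 1/a) / 2) - (q + 1/q) = d1 * d2 / (a * q)"
    using a q by (simp add: d1_def d2_def field_simps)
  show ?thesis
    unfolding fractions denominator using a q d
    by (simp add: field_simps power2_eq_square) (simp add: d1_def d2_def ring_distribs mult_ac)
qed

lemma one_minus_notin_nonpos_Reals: "cmod w < 1 \<Longrightarrow> 1 - w \<notin> \<real>\<^sub>\<le>\<^sub>0"
  using complex_Re_le_cmod[of w] by (auto simp: complex_nonpos_Reals_iff)

lemma has_vector_derivative_semicircle_primitive:
  fixes \<theta> :: real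
  assumes q0: "q \<noteq> 0" and q1: "cmod q < 1"
  shows "((\<lambda>\<theta>. semicircle_primitive q (of_real \<theta>)) has_vector_derivative
           (of_real (sin \<theta>))\<^sup>2 / (2 * of_real (cos \<theta>) - (q + 1/q))) (at \<theta>)"
proof -
  define a where "a = exp (\<i> * of_real \<theta>)"
  have a: "a \<noteq> 0" "cmod a = 1" unfolding a_def by simp_all
  have inv_a: "exp (-(\<i> * of_real \<theta>)) = 1 / a"
    unfolding a_def by (simp add: exp_minus divide_inverse)
  have qa: "cmod (q * a) < 1" "cmod (q * (1/a)) < 1"
    using a q1 by (simp_all add: norm_mult norm_divide)
  then have "q * a \<noteq> 1" "q * (1/a) \<noteq> 1" by auto
  then have "a \<noteq> q" using a(1) by (auto simp: field_simps)
  have two_cos: "2 * cos (of_real \<theta>) = a + 1/a"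
    unfolding cos_exp_eq inv_a a_def by simp
  have "(semicircle_primitive q has_field_derivative
      -(1/4) * (a + 1/a + 2 * q + (q - 1/q) * (q * (1/a) / (1 - q * (1/a)) + q * a / (1 - q * a))))
      (at (of_real \<theta>))"
    using has_field_derivative_semicircle_primitive[of q "of_real \<theta>", unfolded inv_a a_def[symmetric] two_cos]
      one_minus_notin_nonpos_Reals[OF qa(1)] one_minus_notin_nonpos_Reals[OF qa(2)] by simp
  then have "(semicircle_primitive q has_field_derivative
      ((a - 1/a) / (2 * \<i>))\<^sup>2 / (2 * ((a + 1/a) / 2) - (q + 1/q))) (at (of_real \<theta>))"
    unfolding semicircle_partial_fractions[OF a(1) q0 \<open>a \<noteq> q\<close> \<open>q * a \<noteq> 1\<close>] .
  moreover have "of_real (sin \<theta>) = (a - 1/a) / (2 * \<i>)" "of_real (cos \<theta>) = (a + 1/a) / 2"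
    unfolding sin_of_real[symmetric] cos_of_real[symmetric] sin_exp_eq cos_exp_eq inv_a a_def
    by simp_all
  ultimately show ?thesis
    by (simp only:) (rule has_vector_derivative_real_field)
qed

lemma real_neq_plus_inverse:
  fixes x :: real and q :: complex
  assumes q0: "q \<noteq> 0" and q1: "cmod q < 1" and x: "\<bar>x\<bar> \<le> 2"
  shows "of_real x \<noteq> q + 1/q"
proof
  assume eq: "of_real x = q + 1/q"
  define \<theta> where "\<theta> = arccos (x/2)"
  define a where "a = exp (\<i> * of_real \<theta>)"
  have a: "a \<noteq> 0" "cmod a = 1" unfolding a_def by simp_all
  have inv_a: "exp (-(\<i> * of_real \<theta>)) = 1 / a"
    unfolding a_def by (simp add: exp_minus divide_inverse)
  have "(of_real x :: complex) = 2 * cos (of_real \<theta>)"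
    unfolding \<theta>_def using x by (simp add: cos_of_real abs_le_iff)
  also have "\<dots> = a + 1/a"
    unfolding cos_exp_eq inv_a a_def by simp
  finally have "a + 1/a = q + 1/q"
    using eq by simp
  have "(a - q) * (a * q - 1) = a * q * ((a + 1/a) - (q + 1/q))"
    using a q0 by (simp add: field_simps)
  also have "\<dots> = 0"
    using \<open>a + 1/a = q + 1/q\<close> by simp
  finally have "a = q \<or> a * q = 1" by simp
  moreover have "cmod (a * q) < 1" using a q1 by (simp add: norm_mult)
  ultimately show False using a q1 by auto
qed

lemma has_vector_derivative_semicircle_primitive_arccos:
  fixes x :: real and q :: complex
  assumes q0: "q \<noteq> 0" and q1: "cmod q < 1" and x: "\<bar>x\<bar> < 2"
  shows "((\<lambda>x. semicircle_primitive q (of_real (arccos (x/2)))) has_vector_derivative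
           - (of_real (sqrt (4 - x\<^sup>2)) / 4) / (of_real x - (q + 1/q))) (at x)"
proof -
  define r where "r = sqrt (4 - x\<^sup>2)"
  have "x\<^sup>2 < 2\<^sup>2"
    using power_strict_mono[of "\<bar>x\<bar>" 2 2] x by simp
  then have "r > 0" unfolding r_def by simp
  have "1 - (x/2)\<^sup>2 = (4 - x\<^sup>2) / 2\<^sup>2"
    by (simp add: field_simps power_divide)
  then have half_r: "sqrt (1 - (x/2)\<^sup>2) = r / 2"
    unfolding r_def by (simp only: real_sqrt_divide real_sqrt_abs abs_numeral)
  have "((\<lambda>x. arccos (x/2)) has_real_derivative inverse (- sqrt (1 - (x/2)\<^sup>2)) * (1/2)) (at x)"
    by (rule DERIV_chain2[OF DERIV_arccos]) (use x in \<open>auto intro!: derivative_eq_intros\<close>)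
  then have arccos': "((\<lambda>x. arccos (x/2)) has_vector_derivative - 1 / r) (at x)"
    unfolding half_r has_real_derivative_iff_has_vector_derivative by simp
  have sin_cos: "sin (arccos (x/2)) = r / 2" "cos (arccos (x/2)) = x / 2"
    using x by (simp_all add: sin_arccos half_r abs_less_iff)
  have "of_real x - (q + 1/q) \<noteq> 0"
    using real_neq_plus_inverse[OF q0 q1, of x] x by simp
  then have "(- 1 / r) *\<^sub>R ((of_real (sin (arccos (x/2))))\<^sup>2 / (2 * of_real (cos (arccos (x/2))) - (q + 1/q)))
      = - (of_real r / 4) / (of_real x - (q + 1/q))"
    using \<open>r > 0\<close> unfolding sin_cos by (simp add: scaleR_conv_of_real field_simps power2_eq_square)
  then show ?thesis
    using vector_diff_chain_at[OF arccos' has_vector_derivative_semicircle_primitive[OF q0 q1]]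
    unfolding r_def comp_def by simp
qed

lemma msc_plus_inverse:
  assumes q0: "q \<noteq> 0" and q1: "cmod q < 1"
  shows "msc (q + 1/q) = - q"
proof -
  define F where "F x = semicircle_primitive q (of_real (arccos (x/2)))" for x
  define F' where "F' x = - (of_real (sqrt (4 - x\<^sup>2)) / 4) / (of_real x - (q + 1/q))" for x
  have "continuous_on UNIV (\<lambda>\<theta>. semicircle_primitive q (of_real \<theta>))"
    using has_vector_derivative_semicircle_primitive[OF q0 q1]
    by (intro continuous_at_imp_continuous_on ballI has_vector_derivative_continuous) blast
  then have "continuous_on {-2..2} F"
    unfolding F_def by (rule continuous_on_compose2[of UNIV]) (auto intro!: continuous_intros)
  moreover have "(F has_vector_derivative F' x) (at x)" if "x \<in> {-2<..<2}" for x
    unfolding F_def[abs_def] F'_def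
    using has_vector_derivative_semicircle_primitive_arccos[OF q0 q1, of x] that
    by (simp add: abs_less_iff)
  ultimately have "(F' has_integral F 2 - F (-2)) {-2..2}"
    by (intro fundamental_theorem_of_calculus_interior) auto
  moreover have "F 2 = 0" "F (-2) = - (q * of_real pi) / 2"
    unfolding F_def semicircle_primitive_def by (simp_all add: exp_minus)
  ultimately have "((\<lambda>x. (- 2 / of_real pi) * F' x) has_integral (- 2 / of_real pi) * (q * of_real pi / 2)) {-2..2}"
    by (intro has_integral_mult_right) simp
  moreover have "(- 2 / of_real pi) * F' x = of_real (sqrt (4 - x\<^sup>2) / (2 * pi)) / (of_real x - (q + 1/q))"
    for x
  proof -
    have "(- 2 / of_real pi) * - (of_real (sqrt (4 - x\<^sup>2)) / 4) = (of_real (sqrt (4 - x\<^sup>2) / (2 * pi)) :: complex)"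
      by simp
    then show ?thesis
      unfolding F'_def times_divide_eq_right by simp
  qed
  ultimately show ?thesis
    unfolding msc_def by (intro integral_unique) simp
qed

lemma norm_less_1_if_Im_plus_inverse_pos:
  fixes w :: complex
  assumes w0: "w \<noteq> 0" and pos: "0 < Im (w + 1/w)" and neg: "Im w < 0"
  shows "cmod w < 1"
proof (rule ccontr)
  assume "\<not> cmod w < 1"
  then have "1 \<le> (cmod w)\<^sup>2"
    by (simp add: one_le_power)
  then have "1 / (cmod w)\<^sup>2 \<le> 1"
    by (simp add: divide_le_eq_1)
  then have "Im w * (1 - 1 / (cmod w)\<^sup>2) \<le> 0"
    using neg by (intro mult_nonpos_nonneg) auto
  moreover have "Im (w + 1/w) = Im w * (1 - 1 / (cmod w)\<^sup>2)"
    by (simp add: Im_divide' algebra_simps)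
  ultimately show False using pos by simp
qed

text \<open>Of the two roots of \<open>q + 1/q = z\<close>, the condition \<open>Im q < 0\<close> selects the one in the unit disc.\<close>
lemma msc_eq_root:
  fixes z :: complex
  defines "q \<equiv> (z - \<i> * csqrt (4 - z\<^sup>2)) / 2"
  assumes Im_z: "0 < Im z" and Im_q: "Im q < 0"
  shows "msc z = - q"
proof -
  define p where "p = (z + \<i> * csqrt (4 - z\<^sup>2)) / 2"
  have "q * p = (z\<^sup>2 - \<i>\<^sup>2 * (csqrt (4 - z\<^sup>2))\<^sup>2) / 4"
    unfolding q_def p_def by (simp add: power2_eq_square algebra_simps)
  also have "\<dots> = 1" by simp
  finally have "q \<noteq> 0" and "1 / q = p"
    using inverse_unique by (auto simp: inverse_eq_divide)
  moreover have "q + p = z"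
    unfolding q_def p_def by (simp add: field_simps)
  ultimately show ?thesis
    using msc_plus_inverse norm_less_1_if_Im_plus_inverse_pos Im_z Im_q by (metis (no_types))
qed

lemma mE_eq:
  assumes E: "\<bar>E\<bar> < 2"
  shows "mE E = Complex (- E / 2) (sqrt (4 - E\<^sup>2) / 2)"
proof -
  define z where "z \<epsilon> = of_real E + \<i> * of_real \<epsilon>" for \<epsilon> :: real
  define q where "q \<epsilon> = (z \<epsilon> - \<i> * csqrt (4 - (z \<epsilon>)\<^sup>2)) / 2" for \<epsilon>
  define q0 where "q0 = Complex (E / 2) (- sqrt (4 - E\<^sup>2) / 2)"
  have "E\<^sup>2 < 2\<^sup>2"
    using power_strict_mono[of "\<bar>E\<bar>" 2 2] E by simp
  then have E4: "0 < 4 - E\<^sup>2" by simp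
  have "4 - (z 0)\<^sup>2 = of_real (4 - E\<^sup>2)"
    unfolding z_def by simp
  then have csqrt0: "csqrt (4 - (z 0)\<^sup>2) = of_real (sqrt (4 - E\<^sup>2))"
    using E4 by (simp add: csqrt_of_real)
  have "continuous (at 0) q"
    unfolding q_def z_def using E4
    by (intro continuous_intros continuous_at_compose[of _ _ csqrt] continuous_at_csqrt)
       (auto simp: complex_nonpos_Reals_iff)
  moreover have "q 0 = q0"
    unfolding q_def csqrt0 q0_def by (simp add: z_def complex_eq_iff)
  ultimately have lim: "(q \<longlongrightarrow> q0) (at_right 0)"
    by (metis continuous_within tendsto_mono at_le subset_UNIV)
  have "\<forall>\<^sub>F \<epsilon> in at_right 0. Im (q \<epsilon>) < 0"
    using order_tendstoD(2)[OF tendsto_Im[OF lim], of 0] E4 by (simp add: q0_def)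
  then have "\<forall>\<^sub>F \<epsilon> in at_right 0. msc (z \<epsilon>) = - q \<epsilon>"
    using eventually_at_right_less[of 0]
    by eventually_elim (simp add: msc_eq_root q_def z_def)
  then have "((\<lambda>\<epsilon>. msc (z \<epsilon>)) \<longlongrightarrow> - q0) (at_right 0)"
    using tendsto_minus[OF lim] by (rule tendsto_cong[THEN iffD2])
  then have "mE E = - q0"
    unfolding mE_def z_def by (intro tendsto_Lim) auto
  then show ?thesis
    unfolding q0_def by (simp add: complex_eq_iff)
qed

lemma
  assumes "\<bar>E\<bar> < 2"
  shows norm_mE: "cmod (mE E) = 1" and Im_mE_pos: "0 < Im (mE E)"
proof -
  have "E\<^sup>2 < 2\<^sup>2"
    using power_strict_mono[of "\<bar>E\<bar>" 2 2] assms by simp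
  then have "(cmod (mE E))\<^sup>2 = 1"
    unfolding mE_eq[OF assms] cmod_power2 by (simp add: power_divide) (simp add: field_simps)
  then show "cmod (mE E) = 1"
    using norm_ge_zero[of "mE E"] by (auto simp: power2_eq_1_iff)
  show "0 < Im (mE E)"
    unfolding mE_eq[OF assms] using \<open>E\<^sup>2 < 2\<^sup>2\<close> by simp
qed

lemma norm_msig: "\<bar>E\<bar> < 2 \<Longrightarrow> cmod (msig E b) = 1"
  unfolding msig_def using norm_mE by simp

lemma eta_ratio:
  assumes "\<bar>E\<bar> < 2"
  shows "eta E s / eta E t = (1 - s) / (1 - t)"
  unfolding eta_def using Im_mE_pos[OF assms] by simp

lemma maxnorm_Uop_le:
  assumes E: "\<bar>E\<bar> < 2" and L: "L \<ge> 1" and st: "0 \<le> s" "s < t" "t < 1"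
  shows "maxnorm L n (Uop E L n s t \<sigma> A) \<le> maxnorm L n A * (eta E s / eta E t) ^ n"
proof -
  define x where "x i = msig E (\<sigma> i) * msig E (\<sigma> ((i + 1) mod n))" for i
  have x: "cmod (x i) \<le> 1" for i
    unfolding x_def using norm_msig[OF E] by (simp add: norm_mult)
  have "Uop E L n s t \<sigma> A = (\<lambda>a. \<Sum>b\<in>Idx L n. (\<Prod>i<n. ratio_mat L s t (x i) $$ (a i, b i)) * A b)"
    unfolding Uop_def x_def ..
  then show ?thesis
    using maxnorm_tensor_le[OF L ratio_mat_carrier[OF x st] row_abs_sum_ratio_mat_le[OF x st]]
    by (simp add: eta_ratio[OF E])
qed

theorem lemma7p1:
  fixes E :: real and L :: "nat \<Rightarrow> nat" and n :: nat
  assumes "\<bar>E\<bar> < 2" and "n \<ge> 2" and "\<forall>N. L N \<ge> 1"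
  shows "\<forall>\<epsilon>>0. \<forall>\<^sub>F N in sequentially.
           \<forall>\<sigma> s t A. 0 \<le> s \<longrightarrow> s < t \<longrightarrow> t < 1 \<longrightarrow>
             maxnorm (L N) n (Uop E (L N) n s t \<sigma> A)
               \<le> real N powr \<epsilon> * maxnorm (L N) n A * (eta E s / eta E t) ^ n"
proof (intro allI impI)
  fix \<epsilon> :: real
  assume "\<epsilon> > 0"
  have "maxnorm (L N) n (Uop E (L N) n s t \<sigma> A) \<le> real N powr \<epsilon> * maxnorm (L N) n A * (eta E s / eta E t) ^ n"
    if N: "N \<ge> 1" and st: "0 \<le> s" "s < t" "t < 1" for N \<sigma> s t A
  proof -
    let ?bound = "maxnorm (L N) n A * (eta E s / eta E t) ^ n"
    have "1 \<le> real N powr \<epsilon>"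
      using N \<open>\<epsilon> > 0\<close> by (intro ge_one_powr_ge_zero) auto
    moreover have "0 \<le> ?bound"
      using maxnorm_nonneg[OF assms(3)[rule_format]] st by (simp add: eta_ratio[OF assms(1)])
    ultimately have "?bound \<le> real N powr \<epsilon> * ?bound"
      using mult_right_mono by fastforce
    with maxnorm_Uop_le[OF assms(1) assms(3)[rule_format] st] show ?thesis
      unfolding mult.assoc by (rule order_trans)
  qed
  then show "\<forall>\<^sub>F N in sequentially. \<forall>\<sigma> s t A. 0 \<le> s \<longrightarrow> s < t \<longrightarrow> t < 1 \<longrightarrow>
      maxnorm (L N) n (Uop E (L N) n s t \<sigma> A) \<le> real N powr \<epsilon> * maxnorm (L N) n A * (eta E s / eta E t) ^ n"
    by (intro eventually_sequentiallyI[of 1]) blast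
qed

end
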